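(* Assume that each $f_m^j$ is convex and $L$-smooth and that $f$ is $\mu$-strongly convex ($\mu>0$). In the setting described in the context, for every meta-epoch $t$ and every $\theta>0$, $$-2\theta\Big\langle\frac1R\sum_{r=0}^{R-1}\frac1C\sum_{m\in S_t^{\lambda_r}}\frac1N\sum_{j=0}^{N-1}\nabla f_m^{\pi_m^j}(x^{r,j}_{m,t}),\,x_t-x_\star\Big\rangle\le-\frac{\theta\mu}{2}\|x_t-x_\star\|^2-\theta\big(f(x_t)-f(x_\star)\big)+\theta LV_t,$$ where $V_t=\frac{1}{RCN}\sum_{r=0}^{R-1}\sum_{m\in S_t^{\lambda_r}}\sum_{j=0}^{N-1}\|x_t-x^{r,j}_{m,t}\|^2$.
   Context: Setting. There are $M$ clients, each holding $N$ data points. For $m\in[M]$ and $j\in\{0,\dots,N-1\}$, $f_m^j:\mathbb{R}^d\to\mathbb{R}$ is differentiable. Define $f_m=\frac1N\sum_j f_m^j$ and $f=\frac1M\sum_m f_m$, and let $x_\star$ be the minimizer of $f$. $L$-smooth means the gradient is $L$-Lipschitz. $\mu$-strong convexity means $\langle\nabla h(x),y-x\rangle\le-(h(x)-h(y)+\frac\mu2\|x-y\|^2)$ for all $x,y$. Algorithm RR-CLI. Let $C$ be a cohort size with $M=CR$, and let $\gamma,\eta>0$. In meta-epoch $t$: - The clients are partitioned into $R$ disjoint cohorts of size $C$, taken in order $S_t^{\lambda_0},\dots,S_t^{\lambda_{R-1}}$. - Each client $m$ has a permutation $\pi_m=(\pi_m^0,\dots,\pi_m^{N-1})$ of its data indices.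 - Set $x_t^0=x_t$. For $r=0,\dots,R-1$ and $m\in S_t^{\lambda_r}$, set $x^{r,0}_{m,t}=x^r_t$ and $x^{r,j+1}_{m,t}=x^{r,j}_{m,t}-\gamma\nabla f_m^{\pi_m^j}(x^{r,j}_{m,t})$ for $j=0,\dots,N-1$. - The server sets $x^{r+1}_t=x^r_t-\eta\frac1C\sum_{m\in S_t^{\lambda_r}}\frac{x^r_t-x^{r,N}_{m,t}}{\gamma N}$. *)

theory Defs
  imports "HOL-Analysis.Analysis"
begin

text \<open>Local steps of client m in one cohort round:
  loc_iter gamma G p m x j = x^{r,j}_{m,t}, where x = x^r_t is the round's
  starting point, p = pi_m is the client's data permutation (for this epoch),
  and G m i is the gradient of f_m^i.\<close>
primrec loc_iter :: "real \<Rightarrow> (nat \<Rightarrow> nat \<Rightarrow> 'a::real_vector \<Rightarrow> 'a) \<Rightarrow> (nat \<Rightarrow> nat) \<Rightarrow> nat \<Rightarrow> 'a \<Rightarrow> nat \<Rightarrow> 'a" where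
  "loc_iter \<gamma> G p m x 0 = x"
| "loc_iter \<gamma> G p m x (Suc j) =
     loc_iter \<gamma> G p m x j - \<gamma> *\<^sub>R G m (p j) (loc_iter \<gamma> G p m x j)"

text \<open>Server iterates within one meta-epoch: cohort_iter ... S pi x r = x^r_t,
  where x = x_t = x^0_t, S r is the r-th cohort S_t^{lambda_r}, pi m = pi_m.\<close>
primrec cohort_iter :: "real \<Rightarrow> real \<Rightarrow> nat \<Rightarrow> nat \<Rightarrow> (nat \<Rightarrow> nat \<Rightarrow> 'a::real_vector \<Rightarrow> 'a)
    \<Rightarrow> (nat \<Rightarrow> nat set) \<Rightarrow> (nat \<Rightarrow> nat \<Rightarrow> nat) \<Rightarrow> 'a \<Rightarrow> nat \<Rightarrow> 'a" where
  "cohort_iter \<gamma> \<eta> C N G S \<pi> x 0 = x"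
| "cohort_iter \<gamma> \<eta> C N G S \<pi> x (Suc r) =
     cohort_iter \<gamma> \<eta> C N G S \<pi> x r
     - \<eta> *\<^sub>R ((1 / real C) *\<^sub>R
         (\<Sum>m\<in>S r. (1 / (\<gamma> * real N)) *\<^sub>R
            (cohort_iter \<gamma> \<eta> C N G S \<pi> x r
             - loc_iter \<gamma> G (\<pi> m) m (cohort_iter \<gamma> \<eta> C N G S \<pi> x r) N)))"

text \<open>Outer iterates x_t of RR-CLI: S t r is the r-th cohort of meta-epoch t,
  \<pi> t m the permutation of client m in meta-epoch t.\<close>
primrec rrcli :: "real \<Rightarrow> real \<Rightarrow> nat \<Rightarrow> nat \<Rightarrow> nat \<Rightarrow> (nat \<Rightarrow> nat \<Rightarrow> 'a::real_vector \<Rightarrow> 'a)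
    \<Rightarrow> (nat \<Rightarrow> nat \<Rightarrow> nat set) \<Rightarrow> (nat \<Rightarrow> nat \<Rightarrow> nat \<Rightarrow> nat) \<Rightarrow> 'a \<Rightarrow> nat \<Rightarrow> 'a" where
  "rrcli \<gamma> \<eta> C R N G S \<pi> x0 0 = x0"
| "rrcli \<gamma> \<eta> C R N G S \<pi> x0 (Suc t) =
     cohort_iter \<gamma> \<eta> C N G (S t) (\<pi> t) (rrcli \<gamma> \<eta> C R N G S \<pi> x0 t) R"

end

(* For convex F with L-Lipschitz gradient G, the tangent inequality at y and the descent lemma
   from y to x combine into the three-point inequality
     <G y, z - x> <= F z - F x + L/2 |x - y|^2   for arbitrary x, y, z.
   Take x = x_t, z = x_star and y the local iterate at which each gradient is evaluated. Since
   every client's permutation visits each of its data points once and the cohorts partition the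
   clients, the F-terms average to f(x_star) - f(x_t). Half of 2 theta (f(x_star) - f(x_t)) is
   then traded for -theta mu/2 |x_t - x_star|^2 by strong convexity at the minimiser, where the
   gradient of f vanishes. The iterates enter only as evaluation points, so nothing else about
   the algorithm is used. *)

theory Submission
  imports Defs
begin

lemma GDERIV_sum:
  fixes f :: "'i \<Rightarrow> 'a::real_inner \<Rightarrow> real"
  assumes "\<And>i. i \<in> I \<Longrightarrow> GDERIV (f i) x :> df i"
  shows "GDERIV (\<lambda>x. \<Sum>i\<in>I. f i x) x :> (\<Sum>i\<in>I. df i)"
  using has_derivative_sum[of I f "\<lambda>i h. h \<bullet> df i", OF assms[unfolded gderiv_def]]
  by (simp add: gderiv_def inner_sum_right)

lemma GDERIV_cmult:
  "GDERIV f x :> df \<Longrightarrow> GDERIV (\<lambda>x. c * f x) x :> c *\<^sub>R df"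
  by (drule GDERIV_mult[OF GDERIV_const[of c]]) simp

lemma GDERIV_zero_at_minimum:
  fixes f :: "'a::real_inner \<Rightarrow> real"
  assumes "GDERIV f x :> df" and "\<And>y. f x \<le> f y"
  shows "df = 0"
proof -
  have "(\<lambda>h. h \<bullet> df) = (\<lambda>h. 0)"
    using assms
    by (intro has_derivative_local_min[of f _ x] always_eventually) (auto simp: gderiv_def)
  then show ?thesis by (metis inner_eq_zero_iff)
qed

lemma GDERIV_along_line:
  fixes F :: "'a::real_inner \<Rightarrow> real"
  assumes "\<And>z. GDERIV F z :> G z"
  shows "((\<lambda>u. F (y + u *\<^sub>R d)) has_real_derivative (d \<bullet> G (y + u *\<^sub>R d))) (at u)"
proof -
  have "((\<lambda>u. y + u *\<^sub>R d) has_derivative (\<lambda>u. u *\<^sub>R d)) (at u)"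
    by (auto intro!: derivative_eq_intros)
  from has_derivative_compose[OF this assms[unfolded gderiv_def]] show ?thesis
    unfolding has_field_derivative_def by (rule has_derivative_eq_rhs) (auto simp: fun_eq_iff)
qed

lemma GDERIV_Lipschitz_descent:
  fixes F :: "'a::real_inner \<Rightarrow> real"
  assumes deriv: "\<And>z. GDERIV F z :> G z"
    and Lipschitz: "\<And>a b. norm (G a - G b) \<le> L * norm (a - b)"
  shows "F x \<le> F y + G y \<bullet> (x - y) + L / 2 * (norm (x - y))\<^sup>2"
proof -
  define d where "d = x - y"
  define h where "h s = F (y + s *\<^sub>R d) - s * (d \<bullet> G y) - L / 2 * s\<^sup>2 * (norm d)\<^sup>2" for s
  have "h 1 \<le> h 0"
  proof (rule DERIV_nonpos_imp_nonincreasing[of 0 1 h])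
    fix s :: real
    assume s: "0 \<le> s" "s \<le> 1"
    have "(h has_real_derivative (d \<bullet> G (y + s *\<^sub>R d) - d \<bullet> G y - L * s * (norm d)\<^sup>2)) (at s)"
      unfolding h_def
      by (rule derivative_eq_intros GDERIV_along_line[OF deriv] refl | simp)+
    moreover have "d \<bullet> G (y + s *\<^sub>R d) - d \<bullet> G y \<le> norm d * norm (G (y + s *\<^sub>R d) - G y)"
      by (metis inner_diff_right norm_cauchy_schwarz)
    moreover have "\<dots> \<le> L * s * (norm d)\<^sup>2"
      using mult_left_mono[OF Lipschitz[of "y + s *\<^sub>R d" y] norm_ge_zero[of d]] s
      by (simp add: power2_eq_square mult_ac)
    ultimately show "\<exists>D. (h has_real_derivative D) (at s) \<and> D \<le> 0"
      by force
  qed simp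
  then show ?thesis
    by (simp add: h_def d_def inner_commute algebra_simps)
qed

lemma convex_on_GDERIV_above_tangent:
  fixes F :: "'a::real_inner \<Rightarrow> real"
  assumes deriv: "\<And>z. GDERIV F z :> G z" and "convex_on UNIV F"
  shows "F y + G y \<bullet> (x - y) \<le> F x"
proof (rule ccontr)
  assume "\<not> ?thesis"
  then have slope: "(x - y) \<bullet> G y - (F x - F y) > 0"
    by (simp add: inner_commute)
  define \<psi> where "\<psi> u = F (y + u *\<^sub>R (x - y)) - u * (F x - F y)" for u
  have "(\<psi> has_real_derivative ((x - y) \<bullet> G y - (F x - F y))) (at 0)"
    unfolding \<psi>_def using GDERIV_along_line[OF deriv, of y "x - y" 0]
    by (auto intro!: derivative_eq_intros)
  from DERIV_pos_inc_right[OF this slope] obtain e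
    where "e > 0" and increasing: "\<And>h. 0 < h \<Longrightarrow> h < e \<Longrightarrow> \<psi> 0 < \<psi> h"
    by auto
  define h where "h = min (e / 2) 1"
  have h: "0 < h" "h < e" "h \<le> 1"
    using \<open>e > 0\<close> by (auto simp: h_def)
  have "F ((1 - h) *\<^sub>R y + h *\<^sub>R x) \<le> (1 - h) * F y + h * F x"
    using h by (intro convex_onD[OF assms(2)]) auto
  moreover have "(1 - h) *\<^sub>R y + h *\<^sub>R x = y + h *\<^sub>R (x - y)"
    by (simp add: algebra_simps)
  ultimately have "\<psi> h \<le> \<psi> 0"
    by (simp add: \<psi>_def algebra_simps)
  with increasing[OF h(1,2)] show False
    by simp
qed

lemma convex_Lipschitz_gradient_three_point:
  fixes F :: "'a::real_inner \<Rightarrow> real"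
  assumes deriv: "\<And>z. GDERIV F z :> G z" and convex: "convex_on UNIV F"
    and Lipschitz: "\<And>a b. norm (G a - G b) \<le> L * norm (a - b)"
  shows "G y \<bullet> (z - x) \<le> F z - F x + L / 2 * (norm (x - y))\<^sup>2"
  using convex_on_GDERIV_above_tangent[OF deriv convex, of y z]
    GDERIV_Lipschitz_descent[OF deriv Lipschitz, of x y]
  by (simp add: inner_diff_right)

lemma sum_partition_permuted:
  fixes h :: "'i \<Rightarrow> 'j \<Rightarrow> 'b::comm_monoid_add" and R :: nat
  assumes "finite I" and cover: "(\<Union>r<R. S r) = I"
    and disjoint: "\<And>r r'. r < R \<Longrightarrow> r' < R \<Longrightarrow> r \<noteq> r' \<Longrightarrow> S r \<inter> S r' = {}"
    and perm: "\<And>m. m \<in> I \<Longrightarrow> bij_betw (\<pi> m) J J"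
  shows "(\<Sum>r<R. \<Sum>m\<in>S r. \<Sum>j\<in>J. h m (\<pi> m j)) = (\<Sum>m\<in>I. \<Sum>i\<in>J. h m i)"
proof -
  have "(\<Sum>j\<in>J. h m (\<pi> m j)) = (\<Sum>i\<in>J. h m i)" if "r < R" "m \<in> S r" for r m
    using sum.reindex_bij_betw[OF perm] that cover by blast
  then have "(\<Sum>r<R. \<Sum>m\<in>S r. \<Sum>j\<in>J. h m (\<pi> m j)) = (\<Sum>r<R. \<Sum>m\<in>S r. \<Sum>i\<in>J. h m i)"
    by simp
  also have "\<dots> = (\<Sum>m\<in>(\<Union>r<R. S r). \<Sum>i\<in>J. h m i)"
  proof (rule sum.UNION_disjoint[symmetric])
    show "\<forall>r\<in>{..<R}. finite (S r)"
      using \<open>finite I\<close> cover by (metis UN_upper finite_subset)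
  qed (use disjoint in auto)
  finally show ?thesis
    by (simp add: cover)
qed

lemma shuffled_gradient_sum_bound:
  fixes F :: "'i \<Rightarrow> 'j \<Rightarrow> 'a::real_inner \<Rightarrow> real" and R :: nat
  assumes "finite I" and cover: "(\<Union>r<R. S r) = I"
    and disjoint: "\<And>r r'. r < R \<Longrightarrow> r' < R \<Longrightarrow> r \<noteq> r' \<Longrightarrow> S r \<inter> S r' = {}"
    and perm: "\<And>m. m \<in> I \<Longrightarrow> bij_betw (\<pi> m) J J"
    and deriv: "\<And>m j x. m \<in> I \<Longrightarrow> j \<in> J \<Longrightarrow> GDERIV (F m j) x :> G m j x"
    and convex: "\<And>m j. m \<in> I \<Longrightarrow> j \<in> J \<Longrightarrow> convex_on UNIV (F m j)"
    and Lipschitz: "\<And>m j a b. m \<in> I \<Longrightarrow> j \<in> J \<Longrightarrow>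
      norm (G m j a - G m j b) \<le> L * norm (a - b)"
  shows "- (\<Sum>r<R. \<Sum>m\<in>S r. \<Sum>j\<in>J. G m (\<pi> m j) (Y r m j) \<bullet> (x - z))
    \<le> (\<Sum>m\<in>I. \<Sum>i\<in>J. F m i z - F m i x)
      + L / 2 * (\<Sum>r<R. \<Sum>m\<in>S r. \<Sum>j\<in>J. (norm (x - Y r m j))\<^sup>2)"
proof -
  have "- (\<Sum>r<R. \<Sum>m\<in>S r. \<Sum>j\<in>J. G m (\<pi> m j) (Y r m j) \<bullet> (x - z))
      = (\<Sum>r<R. \<Sum>m\<in>S r. \<Sum>j\<in>J. G m (\<pi> m j) (Y r m j) \<bullet> (z - x))"
    by (simp add: inner_diff_right sum_subtractf)
  also have "\<dots> \<le> (\<Sum>r<R. \<Sum>m\<in>S r. \<Sum>j\<in>J.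
      (F m (\<pi> m j) z - F m (\<pi> m j) x) + L / 2 * (norm (x - Y r m j))\<^sup>2)"
    using cover perm[THEN bij_betwE]
    by (intro sum_mono convex_Lipschitz_gradient_three_point deriv convex Lipschitz) auto
  also have "\<dots> = (\<Sum>m\<in>I. \<Sum>i\<in>J. F m i z - F m i x)
      + L / 2 * (\<Sum>r<R. \<Sum>m\<in>S r. \<Sum>j\<in>J. (norm (x - Y r m j))\<^sup>2)"
    using sum_partition_permuted[OF assms(1-4), where h = "\<lambda>m i. F m i z - F m i x"]
    by (simp add: sum.distrib sum_distrib_left)
  finally show ?thesis .
qed

lemma averaged_shuffled_gradient_bound:
  fixes F :: "nat \<Rightarrow> nat \<Rightarrow> 'a::real_inner \<Rightarrow> real"
  assumes "M = C * R" and cover: "(\<Union>r<R. S r) = {..<M}"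
    and disjoint: "\<And>r r'. r < R \<Longrightarrow> r' < R \<Longrightarrow> r \<noteq> r' \<Longrightarrow> S r \<inter> S r' = {}"
    and perm: "\<And>m. m < M \<Longrightarrow> bij_betw (\<pi> m) {..<N} {..<N}"
    and deriv: "\<And>m j x. m < M \<Longrightarrow> j < N \<Longrightarrow> GDERIV (F m j) x :> G m j x"
    and convex: "\<And>m j. m < M \<Longrightarrow> j < N \<Longrightarrow> convex_on UNIV (F m j)"
    and Lipschitz: "\<And>m j a b. m < M \<Longrightarrow> j < N \<Longrightarrow>
      norm (G m j a - G m j b) \<le> L * norm (a - b)"
  shows "- (((1 / real R) *\<^sub>R (\<Sum>r<R. (1 / real C) *\<^sub>R (\<Sum>m\<in>S r.
              (1 / real N) *\<^sub>R (\<Sum>j<N. G m (\<pi> m j) (Y r m j))))) \<bullet> (x - z))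
    \<le> (1 / real M) * (\<Sum>m<M. (1 / real N) * (\<Sum>j<N. F m j z))
      - (1 / real M) * (\<Sum>m<M. (1 / real N) * (\<Sum>j<N. F m j x))
      + L / 2 * ((1 / (real R * real C * real N)) *
          (\<Sum>r<R. \<Sum>m\<in>S r. \<Sum>j<N. (norm (x - Y r m j))\<^sup>2))"
proof -
  define c where "c = 1 / (real R * real C * real N)"
  have c_nonneg: "c \<ge> 0"
    by (simp add: c_def)
  have average_gradient: "((1 / real R) *\<^sub>R (\<Sum>r<R. (1 / real C) *\<^sub>R (\<Sum>m\<in>S r.
              (1 / real N) *\<^sub>R (\<Sum>j<N. G m (\<pi> m j) (Y r m j))))) \<bullet> (x - z)
      = c * (\<Sum>r<R. \<Sum>m\<in>S r. \<Sum>j<N. G m (\<pi> m j) (Y r m j) \<bullet> (x - z))"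
    by (simp add: c_def inner_sum_left sum_distrib_left mult.assoc)
  have average_value: "(1 / real M) * (\<Sum>m<M. (1 / real N) * (\<Sum>j<N. F m j z))
      - (1 / real M) * (\<Sum>m<M. (1 / real N) * (\<Sum>j<N. F m j x))
      = c * (\<Sum>m<M. \<Sum>i<N. F m i z - F m i x)"
    using assms(1)
    by (simp add: c_def sum_distrib_left sum_divide_distrib sum_subtractf right_diff_distrib mult_ac)
  have "- (\<Sum>r<R. \<Sum>m\<in>S r. \<Sum>j<N. G m (\<pi> m j) (Y r m j) \<bullet> (x - z))
    \<le> (\<Sum>m<M. \<Sum>i<N. F m i z - F m i x)
      + L / 2 * (\<Sum>r<R. \<Sum>m\<in>S r. \<Sum>j<N. (norm (x - Y r m j))\<^sup>2)"
    by (rule shuffled_gradient_sum_bound[OF _ cover disjoint]) (use perm deriv convex Lipschitz in auto)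
  from mult_left_mono[OF this c_nonneg] show ?thesis
    unfolding average_gradient average_value c_def[symmetric] by (simp add: algebra_simps)
qed

theorem lemma9:
  fixes F :: "nat \<Rightarrow> nat \<Rightarrow> 'a::euclidean_space \<Rightarrow> real"
    and G :: "nat \<Rightarrow> nat \<Rightarrow> 'a \<Rightarrow> 'a"
    and M N C R :: nat
    and S :: "nat \<Rightarrow> nat \<Rightarrow> nat set"
    and \<pi> :: "nat \<Rightarrow> nat \<Rightarrow> nat \<Rightarrow> nat"
    and \<gamma> \<eta> L \<mu> \<theta> :: real
    and x0 xstar :: 'a
    and t :: nat
  defines "f \<equiv> (\<lambda>x. (1 / real M) * (\<Sum>m<M. (1 / real N) * (\<Sum>j<N. F m j x)))"
    and "gradf \<equiv> (\<lambda>x. (1 / real M) *\<^sub>R (\<Sum>m<M. (1 / real N) *\<^sub>R (\<Sum>j<N. G m j x)))"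
    and "xs \<equiv> rrcli \<gamma> \<eta> C R N G S \<pi> x0"
    and "xl \<equiv> (\<lambda>t r m j. loc_iter \<gamma> G (\<pi> t m) m (cohort_iter \<gamma> \<eta> C N G (S t) (\<pi> t) (rrcli \<gamma> \<eta> C R N G S \<pi> x0 t) r) j)"
  assumes N_pos: "N > 0" and C_pos: "C > 0" and R_pos: "R > 0"
    and M_def: "M = C * R"
    and step_pos: "\<gamma> > 0" "\<eta> > 0"
    and cohort_sub: "\<And>t r. r < R \<Longrightarrow> S t r \<subseteq> {..<M}"
    and cohort_card: "\<And>t r. r < R \<Longrightarrow> card (S t r) = C"
    and cohort_disj: "\<And>t r r'. r < R \<Longrightarrow> r' < R \<Longrightarrow> r \<noteq> r' \<Longrightarrow> S t r \<inter> S t r' = {}"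
    and cohort_cover: "\<And>t. (\<Union>r<R. S t r) = {..<M}"
    and perm: "\<And>t m. m < M \<Longrightarrow> bij_betw (\<pi> t m) {..<N} {..<N}"
    and grad: "\<And>m j x. m < M \<Longrightarrow> j < N \<Longrightarrow> GDERIV (F m j) x :> G m j x"
    and cvx: "\<And>m j. m < M \<Longrightarrow> j < N \<Longrightarrow> convex_on UNIV (F m j)"
    and smooth: "\<And>m j x y. m < M \<Longrightarrow> j < N \<Longrightarrow> norm (G m j x - G m j y) \<le> L * norm (x - y)"
    and mu_pos: "\<mu> > 0"
    and strong: "\<And>x y. gradf x \<bullet> (y - x) \<le> - (f x - f y + \<mu> / 2 * (norm (x - y))\<^sup>2)"
    and xstar_min: "\<And>y. f xstar \<le> f y"
    and theta_pos: "\<theta> > 0"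
  shows "- 2 * \<theta> * (((1 / real R) *\<^sub>R (\<Sum>r<R. (1 / real C) *\<^sub>R (\<Sum>m\<in>S t r.
              (1 / real N) *\<^sub>R (\<Sum>j<N. G m (\<pi> t m j) (xl t r m j))))) \<bullet> (xs t - xstar))
         \<le> - (\<theta> * \<mu> / 2) * (norm (xs t - xstar))\<^sup>2 - \<theta> * (f (xs t) - f xstar)
           + \<theta> * L * ((1 / (real R * real C * real N)) *
               (\<Sum>r<R. \<Sum>m\<in>S t r. \<Sum>j<N. (norm (xs t - xl t r m j))\<^sup>2))"
proof -
  have "GDERIV f x :> gradf x" for x
    unfolding f_def gradf_def by (intro GDERIV_cmult GDERIV_sum grad) auto
  then have "gradf xstar = 0"
    using xstar_min by (rule GDERIV_zero_at_minimum)
  then have growth: "\<mu> / 2 * (norm (xs t - xstar))\<^sup>2 \<le> f (xs t) - f xstar"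
    using strong[of xstar "xs t"] by (simp add: norm_minus_commute)
  have "- (((1 / real R) *\<^sub>R (\<Sum>r<R. (1 / real C) *\<^sub>R (\<Sum>m\<in>S t r.
              (1 / real N) *\<^sub>R (\<Sum>j<N. G m (\<pi> t m j) (xl t r m j))))) \<bullet> (xs t - xstar))
      \<le> f xstar - f (xs t)
        + L / 2 * ((1 / (real R * real C * real N)) *
            (\<Sum>r<R. \<Sum>m\<in>S t r. \<Sum>j<N. (norm (xs t - xl t r m j))\<^sup>2))"
    unfolding f_def
    by (rule averaged_shuffled_gradient_bound[OF M_def cohort_cover cohort_disj perm grad cvx smooth])
  from mult_left_mono[OF this, of \<theta>] mult_left_mono[OF growth, of \<theta>] theta_pos show ?thesis
    by (simp add: algebra_simps)
qed

end
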